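(* Consider the 2D pure diffusion equation $u_t = d_{11} u_{x_1x_1} + d_{22} u_{x_2x_2} + (d_{12}+d_{21}) u_{x_1x_2}$ on the unit square $[0,1]^2$ with periodic boundary condition, where $D=(d_{ij})\in\mathbb R^{2\times2}$ is positive semi-definite and $|d_{12}+d_{21}|\le 2\gamma\sqrt{d_{11}d_{22}}$ with $\gamma\in[0,1]$. Let the semi-discrete system $u'=F_0(u)+F_1(u)+F_2(u)$ ($s=2$) be obtained by central second-order finite difference discretization on a uniform Cartesian grid with mesh-width $h$ in both directions, with $F_0$ the mixed-derivative part and $F_j$ the second-derivative part in the $x_j$-direction ($j=1,2$). Consider the two-step ($k=2$) modified stabilizing correction method $$v_0=\sum_{i=1}^2\Big(a_iu_{n-i}+\Delta t\,\hat b_iF_0(u_{n-i})+\Delta t\,\check b_i\sum_{j=1}^2F_j(u_{n-i})\Big),$$ $$v_j=v_{j-1}+\Delta t\sum_{i=1}^2(b_i-\check b_i)F_j(u_{n-i})+\Delta t\,\theta F_j(v_j)\ (j=1,2),\qquad u_n=v_2,$$ with coefficients given by one of: (CNLF) $a=(0,1)$, $b=(0,1)$, $\hat b=(2,0)$, $\check b=(1,1)$, $\theta=1$; (BDF2-type) $a=(\tfrac43,-\tfrac13)$, $b=(\tfrac43-2\theta,-\tfrac23+\theta)$, $\hat b=(\tfrac43,-\tfrac23)$, $\check b=(\tfrac43-\theta,-\tfrac23+\theta)$; (Adams2-type) $a=(1,0)$, $b=(\tfrac32-2\theta,-\tfrac12+\theta)$, $\hat b=(\tfrac32,-\tfrac12)$,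 $\check b=(\tfrac32-\theta,-\tfrac12+\theta)$. Then these three methods are unconditionally stable (in the discrete $L_2$-norm, for all $r=\Delta t/h^2>0$) for the following parameter values $\theta$: CNLF: $\theta = 1$; BDF2-type: $\theta \geq\max\left\{\frac{1}{2}, \frac{\gamma+1}{2+2/\sqrt{3}} \right\}$; Adams2-type: $\theta \geq\max\left\{\frac{1}{2}, \frac{\gamma+1}{3} \right\}$.
   Context: Stability is understood via von Neumann analysis: the matrices are normal and commuting with scaled eigenvalues $z_j=-2rd_{jj}(1-\cos\phi_j)$ ($j=1,2$), $z_0=-r(d_{12}+d_{21})\sin\phi_1\sin\phi_2$, $r=\Delta t/h^2$, $\phi_j\in[0,2\pi]$, and stability means that the characteristic polynomial $\zeta^2-r_1\zeta-r_2$ satisfies the root condition (all roots of modulus $\le1$, those of modulus one simple), where $r_i=\frac1p\big(a_i+\hat b_iz_0+\check b_i(z_1+z_2)+\frac1\theta(b_i-\check b_i)(1-p)\big)$, $p=(1-\theta z_1)(1-\theta z_2)$. Here $\theta=b_0$. *)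

theory Defs
  imports "HOL-Computational_Algebra.Polynomial" Complex_Main
begin

definition char_poly :: "real \<Rightarrow> real \<Rightarrow> complex poly" where
  "char_poly r1 r2 = [:- complex_of_real r2, - complex_of_real r1, 1:]"

definition root_condition :: "complex poly \<Rightarrow> bool" where
  "root_condition p \<longleftrightarrow>
     (\<forall>z. poly p z = 0 \<longrightarrow> cmod z \<le> 1 \<and> (cmod z = 1 \<longrightarrow> order z p = 1))"

text \<open>Amplification coefficient r_i of the modified stabilizing correction method,
  coefficient sequences indexed by i = 1, 2.\<close>
definition msc_coeff ::
  "(nat \<Rightarrow> real) \<Rightarrow> (nat \<Rightarrow> real) \<Rightarrow> (nat \<Rightarrow> real) \<Rightarrow> (nat \<Rightarrow> real) \<Rightarrow> real
   \<Rightarrow> nat \<Rightarrow> real \<Rightarrow> real \<Rightarrow> real \<Rightarrow> real" where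
  "msc_coeff a b bh bc \<theta> i z0 z1 z2 =
     (let p = (1 - \<theta> * z1) * (1 - \<theta> * z2)
      in (a i + bh i * z0 + bc i * (z1 + z2) + (1 / \<theta>) * (b i - bc i) * (1 - p)) / p)"

text \<open>Von Neumann (unconditional) stability for the 2D diffusion problem with
  diffusion matrix entries d11 d12 d21 d22: root condition for all r > 0 and all
  frequencies phi1, phi2 in [0, 2 pi].\<close>
definition vn_stable ::
  "(nat \<Rightarrow> real) \<Rightarrow> (nat \<Rightarrow> real) \<Rightarrow> (nat \<Rightarrow> real) \<Rightarrow> (nat \<Rightarrow> real) \<Rightarrow> real
   \<Rightarrow> real \<Rightarrow> real \<Rightarrow> real \<Rightarrow> real \<Rightarrow> bool" where
  "vn_stable a b bh bc \<theta> d11 d12 d21 d22 \<longleftrightarrow>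
     (\<forall>r::real. r > 0 \<longrightarrow>
       (\<forall>\<phi>1 \<in> {0..2*pi}. \<forall>\<phi>2 \<in> {0..2*pi}.
          (let z1 = - 2 * r * d11 * (1 - cos \<phi>1);
               z2 = - 2 * r * d22 * (1 - cos \<phi>2);
               z0 = - r * (d12 + d21) * sin \<phi>1 * sin \<phi>2
           in root_condition
                (char_poly (msc_coeff a b bh bc \<theta> 1 z0 z1 z2)
                           (msc_coeff a b bh bc \<theta> 2 z0 z1 z2)))))"

definition pair2 :: "real \<Rightarrow> real \<Rightarrow> nat \<Rightarrow> real" where
  "pair2 x y i = (if i = 1 then x else y)"

definition cnlf_a where "cnlf_a = pair2 0 1"
definition cnlf_b where "cnlf_b = pair2 0 1"
definition cnlf_bh where "cnlf_bh = pair2 2 0"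
definition cnlf_bc where "cnlf_bc = pair2 1 1"

definition bdf2_a where "bdf2_a = pair2 (4/3) (-1/3)"
definition bdf2_b where "bdf2_b \<theta> = pair2 (4/3 - 2*\<theta>) (-2/3 + \<theta>)"
definition bdf2_bh where "bdf2_bh = pair2 (4/3) (-2/3)"
definition bdf2_bc where "bdf2_bc \<theta> = pair2 (4/3 - \<theta>) (-2/3 + \<theta>)"

definition adams2_a where "adams2_a = pair2 1 0"
definition adams2_b where "adams2_b \<theta> = pair2 (3/2 - 2*\<theta>) (-1/2 + \<theta>)"
definition adams2_bh where "adams2_bh = pair2 (3/2) (-1/2)"
definition adams2_bc where "adams2_bc \<theta> = pair2 (3/2 - \<theta>) (-1/2 + \<theta>)"

end

theory Submission
  imports Defs
begin

text \<open>With \<open>s = -(z1 + z2)\<close> and \<open>q = sqrt (z1 z2)\<close>, both coefficients of the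
  characteristic polynomial share the positive denominator \<open>p = 1 + \<theta> s + \<theta>\<^sup>2 q\<^sup>2\<close>, so
  the Schur--Cohn criterion \<open>-1 < r2\<close>, \<open>\<bar>r1\<bar> \<le> 1 - r2\<close> becomes a pair of
  polynomial inequalities in \<open>s\<close>, \<open>q\<close> and the mixed symbol \<open>z0\<close>. The symbols
  satisfy \<open>2 q \<le> s\<close> (AM-GM) and \<open>\<bar>z0\<bar> \<le> 2 \<gamma> q\<close> (from the bound on the mixed
  coefficient and \<open>sin\<^sup>2 \<le> 2 (1 - cos)\<close>). On that region all inequalities are
  linear except one, which for the BDF2- and Adams2-type methods reduces to the
  nonnegativity of a quadratic in \<open>q\<close>; its discriminant condition is exactly the
  lower bound on \<open>\<theta>\<close>.\<close>

lemma real_root_abs_le_one: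
  fixes x r1 r2 :: real
  assumes root: "x*x - r1*x - r2 = 0" and r2: "-1 < r2" and r1: "\<bar>r1\<bar> \<le> 1 - r2"
  shows "\<bar>x\<bar> \<le> 1"
proof -
  have "x \<ge> -1"
  proof (rule ccontr)
    assume "\<not> x \<ge> -1"
    then have "(-1 - x) * (1 - x + r1) > 0" using r1 r2 by (intro mult_pos_pos) auto
    then show False using root r1 by (simp add: algebra_simps)
  qed
  moreover have "x \<le> 1"
  proof (rule ccontr)
    assume "\<not> x \<le> 1"
    then have "(x - 1) * (x + 1 - r1) > 0" using r1 r2 by (intro mult_pos_pos) auto
    then show False using root r1 by (simp add: algebra_simps)
  qed
  ultimately show ?thesis by simp
qed

lemma char_poly_root_cmod:
  fixes r1 r2 :: real
  assumes z: "poly (char_poly r1 r2) z = 0" and r2: "-1 < r2" and r1: "\<bar>r1\<bar> \<le> 1 - r2"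
  shows "cmod z \<le> 1 \<and> (cmod z = 1 \<longrightarrow> 2*z \<noteq> complex_of_real r1)"
proof -
  have eq: "z * z - r1 * z - r2 = 0" using z by (simp add: char_poly_def algebra_simps)
  have re: "Re z * Re z - Im z * Im z - r1 * Re z - r2 = 0" using arg_cong[OF eq, of Re] by simp
  have im: "Im z * (2 * Re z - r1) = 0"
    using arg_cong[OF eq, of Im] by (simp add: algebra_simps)
  show ?thesis
  proof (cases "Im z = 0")
    case False
    then have "r1 = 2 * Re z" using im by simp
    then have "(cmod z)^2 = - r2"
      unfolding cmod_power2 using re by (simp add: algebra_simps power2_eq_square)
    then have "(cmod z)^2 < 1" using r2 by simp
    then show ?thesis by (simp add: abs_square_less_1)
  next
    case True
    then have z_real: "z = complex_of_real (Re z)" by (simp add: complex_eq_iff)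
    have "\<bar>Re z\<bar> \<le> 1" using re True r2 r1 by (intro real_root_abs_le_one) auto
    moreover have "2 * complex_of_real (Re z) \<noteq> complex_of_real r1" if "\<bar>Re z\<bar> = 1"
      using that r1 r2 of_real_eq_iff[of "2 * Re z" r1] by auto
    ultimately show ?thesis by (subst (1 2 3) z_real) auto
  qed
qed

lemma order_char_poly_eq_one:
  assumes z: "poly (char_poly r1 r2) z = 0" and "2*z \<noteq> complex_of_real r1"
  shows "order z (char_poly r1 r2) = 1"
proof -
  have "poly (pderiv (char_poly r1 r2)) z \<noteq> 0"
    using assms(2) by (simp add: char_poly_def pderiv_pCons algebra_simps)
  moreover have "char_poly r1 r2 \<noteq> 0" by (simp add: char_poly_def)
  ultimately show ?thesis using order_pderiv[OF _ z] order_0I by simp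
qed

lemma root_condition_char_poly:
  fixes r1 r2 :: real
  assumes "-1 < r2" "\<bar>r1\<bar> \<le> 1 - r2"
  shows "root_condition (char_poly r1 r2)"
  unfolding root_condition_def
  using char_poly_root_cmod[OF _ assms] order_char_poly_eq_one by blast

lemma root_condition_char_poly_div:
  fixes p N1 N2 :: real
  assumes p: "0 < p" and "0 < p + N2" "\<bar>N1\<bar> \<le> p - N2"
  shows "root_condition (char_poly (N1/p) (N2/p))"
proof (rule root_condition_char_poly)
  show "-1 < N2/p" using assms by (simp add: field_simps)
  have "\<bar>N1/p\<bar> = \<bar>N1\<bar>/p" using p by simp
  also have "\<dots> \<le> (p - N2)/p" using assms by (simp add: divide_right_mono)
  also have "\<dots> = 1 - N2/p" using p by (simp add: diff_divide_distrib)
  finally show "\<bar>N1/p\<bar> \<le> 1 - N2/p" .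
qed

lemma msc_coeff_eq:
  fixes \<theta> s q z0 z1 z2 :: real
  assumes \<theta>: "\<theta> \<noteq> 0" and bc: "bc 1 = b 1 + \<theta>" "bc 2 = b 2"
    and s: "s = -(z1 + z2)" and q: "z1 * z2 = q^2"
  shows "msc_coeff a b bh bc \<theta> 1 z0 z1 z2
           = (a 1 + bh 1 * z0 - b 1 * s + \<theta>^2 * q^2) / (1 + \<theta>*s + \<theta>^2 * q^2)"
    and "msc_coeff a b bh bc \<theta> 2 z0 z1 z2
           = (a 2 + bh 2 * z0 - b 2 * s) / (1 + \<theta>*s + \<theta>^2 * q^2)"
proof -
  have p: "(1 - \<theta>*z1) * (1 - \<theta>*z2) = 1 + \<theta>*s + \<theta>^2 * q^2"
    unfolding s q[symmetric] by (simp add: algebra_simps power2_eq_square)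
  have step: "1 / \<theta> * c * (1 - (1 + \<theta>*s + \<theta>^2 * q^2)) = - c * (s + \<theta> * q^2)" for c
    using \<theta> by (simp add: field_simps power2_eq_square)
  show "msc_coeff a b bh bc \<theta> 1 z0 z1 z2
          = (a 1 + bh 1 * z0 - b 1 * s + \<theta>^2 * q^2) / (1 + \<theta>*s + \<theta>^2 * q^2)"
    unfolding msc_coeff_def Let_def p step unfolding s using bc
    by (simp add: algebra_simps power2_eq_square)
  show "msc_coeff a b bh bc \<theta> 2 z0 z1 z2
          = (a 2 + bh 2 * z0 - b 2 * s) / (1 + \<theta>*s + \<theta>^2 * q^2)"
    unfolding msc_coeff_def Let_def p step unfolding s using bc
    by (simp add: algebra_simps power2_eq_square)
qed

lemma sin_squared_le_two_one_minus_cos: "(sin x)^2 \<le> 2 * (1 - cos (x::real))"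
proof -
  have "(sin x)^2 = (1 - cos x) * (1 + cos x)"
    by (simp add: sin_squared_eq power2_eq_square algebra_simps)
  also have "\<dots> \<le> (1 - cos x) * 2" using cos_le_one[of x] by (intro mult_left_mono) auto
  finally show ?thesis by simp
qed

lemma diffusion_symbol_bounds:
  fixes r d11 d12 d21 d22 \<gamma> \<phi>1 \<phi>2 :: real
  assumes d: "0 \<le> d11" "0 \<le> d22" and r: "0 < r" and \<gamma>: "0 \<le> \<gamma>"
    and mixed: "\<bar>d12 + d21\<bar> \<le> 2 * \<gamma> * sqrt (d11 * d22)"
  defines "z1 \<equiv> - 2 * r * d11 * (1 - cos \<phi>1)"
    and "z2 \<equiv> - 2 * r * d22 * (1 - cos \<phi>2)"
    and "z0 \<equiv> - r * (d12 + d21) * sin \<phi>1 * sin \<phi>2"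
  shows "z1 \<le> 0" "z2 \<le> 0" "\<bar>z0\<bar> \<le> 2 * \<gamma> * sqrt (z1 * z2)"
proof -
  have c: "0 \<le> 1 - cos \<phi>1" "0 \<le> 1 - cos \<phi>2" using cos_le_one by auto
  show "z1 \<le> 0" "z2 \<le> 0" unfolding z1_def z2_def using d r c by simp_all
  have coeff: "(d12 + d21)^2 \<le> 4 * \<gamma>^2 * (d11 * d22)"
  proof -
    have "(d12 + d21)^2 = \<bar>d12 + d21\<bar>^2" by simp
    also have "\<dots> \<le> (2 * \<gamma> * sqrt (d11 * d22))^2" using mixed by (intro power_mono) auto
    also have "\<dots> = 4 * \<gamma>^2 * (d11 * d22)" using d by (simp add: power_mult_distrib)
    finally show ?thesis .
  qed
  have sines: "(sin \<phi>1)^2 * (sin \<phi>2)^2 \<le> (2 * (1 - cos \<phi>1)) * (2 * (1 - cos \<phi>2))"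
    using c by (intro mult_mono sin_squared_le_two_one_minus_cos) auto
  have "z0^2 = r^2 * ((d12 + d21)^2 * ((sin \<phi>1)^2 * (sin \<phi>2)^2))"
    unfolding z0_def power_mult_distrib by (simp only: power2_minus mult_ac)
  also have "\<dots> \<le> r^2 * ((4 * \<gamma>^2 * (d11 * d22)) * ((2 * (1 - cos \<phi>1)) * (2 * (1 - cos \<phi>2))))"
    using d by (intro mult_left_mono mult_mono[OF coeff sines]) auto
  also have "\<dots> = (2 * \<gamma>)^2 * (z1 * z2)"
    unfolding z1_def z2_def by (simp add: power2_eq_square algebra_simps)
  finally have "sqrt (z0^2) \<le> sqrt ((2 * \<gamma>)^2 * (z1 * z2))" by (rule real_sqrt_le_mono)
  then show "\<bar>z0\<bar> \<le> 2 * \<gamma> * sqrt (z1 * z2)" using \<gamma> by (simp add: real_sqrt_mult)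
qed

lemma two_sqrt_mult_le_neg_add:
  fixes x y :: real
  assumes "x \<le> 0" "y \<le> 0"
  shows "2 * sqrt (x * y) \<le> -(x + y)"
  using arith_geo_mean_sqrt[of "-x" "-y"] assms by simp

text \<open>Here \<open>s\<close> and \<open>q\<close> stand for \<open>-(z1 + z2)\<close> and \<open>sqrt (z1 z2)\<close>, and
  \<open>p\<close>, \<open>N1\<close>, \<open>N2\<close> are the common denominator and the numerators of the
  coefficients given by msc_coeff_eq.\<close>
definition msc_schur_bounds ::
  "(nat \<Rightarrow> real) \<Rightarrow> (nat \<Rightarrow> real) \<Rightarrow> (nat \<Rightarrow> real) \<Rightarrow> real \<Rightarrow> real \<Rightarrow> bool" where
  "msc_schur_bounds a b bh \<theta> \<gamma> \<longleftrightarrow>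
     (\<forall>q s z0. 0 \<le> q \<longrightarrow> 2*q \<le> s \<longrightarrow> \<bar>z0\<bar> \<le> 2*\<gamma>*q \<longrightarrow>
       (let p = 1 + \<theta>*s + \<theta>^2 * q^2;
            N1 = a 1 + bh 1 * z0 - b 1 * s + \<theta>^2 * q^2;
            N2 = a 2 + bh 2 * z0 - b 2 * s
        in 0 < p + N2 \<and> N1 \<le> p - N2 \<and> - N1 \<le> p - N2))"

lemma msc_root_condition:
  fixes \<theta> \<gamma> z0 z1 z2 :: real
  assumes \<theta>: "0 < \<theta>" and bc: "bc 1 = b 1 + \<theta>" "bc 2 = b 2"
    and schur: "msc_schur_bounds a b bh \<theta> \<gamma>"
    and z: "z1 \<le> 0" "z2 \<le> 0" "\<bar>z0\<bar> \<le> 2 * \<gamma> * sqrt (z1 * z2)"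
  shows "root_condition (char_poly (msc_coeff a b bh bc \<theta> 1 z0 z1 z2)
                                   (msc_coeff a b bh bc \<theta> 2 z0 z1 z2))"
proof -
  define q where "q = sqrt (z1 * z2)"
  define s where "s = -(z1 + z2)"
  have "0 \<le> z1 * z2" using z by (simp add: mult_nonpos_nonpos)
  then have q: "0 \<le> q" "z1 * z2 = q^2" unfolding q_def by simp_all
  have qs: "2*q \<le> s" unfolding q_def s_def using z(1,2) by (rule two_sqrt_mult_le_neg_add)
  have "0 < 1 + \<theta>*s + \<theta>^2 * q^2" using \<theta> q qs by (simp add: add_pos_nonneg)
  moreover have "0 < (1 + \<theta>*s + \<theta>^2 * q^2) + (a 2 + bh 2 * z0 - b 2 * s)
    \<and> \<bar>a 1 + bh 1 * z0 - b 1 * s + \<theta>^2 * q^2\<bar>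
          \<le> (1 + \<theta>*s + \<theta>^2 * q^2) - (a 2 + bh 2 * z0 - b 2 * s)"
    using schur q(1) qs z(3)[folded q_def]
    unfolding msc_schur_bounds_def Let_def abs_le_iff by blast
  ultimately show ?thesis
    unfolding msc_coeff_eq[OF less_imp_neq[OF \<theta>, symmetric] bc s_def q(2)]
    by (auto intro: root_condition_char_poly_div)
qed

lemma vn_stable_if_msc_schur_bounds:
  fixes d11 d12 d21 d22 \<gamma> \<theta> :: real
  assumes psd: "\<forall>x1 x2::real. d11 * x1^2 + (d12 + d21) * x1 * x2 + d22 * x2^2 \<ge> 0"
    and \<gamma>: "0 \<le> \<gamma>" and mixed: "\<bar>d12 + d21\<bar> \<le> 2 * \<gamma> * sqrt (d11 * d22)"
    and \<theta>: "0 < \<theta>" and bc: "bc 1 = b 1 + \<theta>" "bc 2 = b 2"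
    and schur: "msc_schur_bounds a b bh \<theta> \<gamma>"
  shows "vn_stable a b bh bc \<theta> d11 d12 d21 d22"
proof -
  have d: "0 \<le> d11" "0 \<le> d22" using psd[rule_format, of 1 0] psd[rule_format, of 0 1] by simp_all
  show ?thesis
    unfolding vn_stable_def Let_def
    by (intro allI impI ballI msc_root_condition[OF \<theta> bc schur]
        diffusion_symbol_bounds[OF d _ \<gamma> mixed])
qed

lemma quadratic_nonneg_on_nonneg:
  fixes a b c q :: real
  assumes "0 \<le> a" "0 \<le> c" "0 \<le> q" and b: "-2 * sqrt (a * c) \<le> b"
  shows "0 \<le> a + b * q + c * q^2"
proof -
  have "0 \<le> (sqrt a - sqrt c * q)^2" by simp
  also have "\<dots> = a - 2 * sqrt (a * c) * q + c * q^2"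
    using assms by (simp add: power2_diff power_mult_distrib real_sqrt_mult algebra_simps)
  also have "\<dots> \<le> a + b * q + c * q^2"
    using mult_right_mono[OF b \<open>0 \<le> q\<close>] by simp
  finally show ?thesis .
qed

text \<open>The condition \<open>-N1 \<le> p - N2\<close> for the BDF2- and Adams2-type methods,
  where \<open>\<alpha> = 1 + a 1 - a 2\<close>.\<close>
lemma msc_sum_condition:
  fixes \<theta> \<gamma> \<alpha> q s z0 :: real
  assumes \<theta>: "1/2 \<le> \<theta>" and \<alpha>: "0 \<le> \<alpha>"
    and q: "0 \<le> q" "2*q \<le> s" and z0: "\<bar>z0\<bar> \<le> 2*\<gamma>*q"
    and disc: "4*(\<gamma> + 1) - 8*\<theta> \<le> 2 * sqrt (2*\<alpha>) * \<theta>"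
  shows "0 \<le> \<alpha> + (4*\<theta> - 2) * s + 2*\<theta>^2 * q^2 + 2*z0"
proof -
  have "sqrt (\<alpha> * (2*\<theta>^2)) = sqrt (2*\<alpha>) * \<theta>"
    using \<theta> by (simp add: real_sqrt_mult mult.left_commute)
  then have "0 \<le> \<alpha> + (8*\<theta> - 4 - 4*\<gamma>) * q + (2*\<theta>^2) * q^2"
    using disc \<theta> \<alpha> q(1) by (intro quadratic_nonneg_on_nonneg) auto
  moreover have "(4*\<theta> - 2) * (2*q) \<le> (4*\<theta> - 2) * s" using \<theta> q by (intro mult_left_mono) auto
  moreover have "-(2*\<gamma>*q) \<le> z0" using z0 by linarith
  ultimately show ?thesis by (simp add: algebra_simps)
qed

lemma cnlf_schur_bounds:
  assumes "\<gamma> \<le> 1"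
  shows "msc_schur_bounds cnlf_a cnlf_b cnlf_bh 1 \<gamma>"
  unfolding msc_schur_bounds_def Let_def
proof (intro allI impI, goal_cases)
  case (1 q s z0)
  then have q: "0 \<le> q" "2*q \<le> s" and z0: "\<bar>z0\<bar> \<le> 2*\<gamma>*q" by simp_all
  have "\<gamma>*q \<le> q" using mult_right_mono[OF assms q(1)] by simp
  then have "\<bar>z0\<bar> \<le> s" using q z0 by linarith
  then show ?case
    by (simp add: cnlf_a_def cnlf_b_def cnlf_bh_def pair2_def abs_le_iff)
      (use zero_le_power2[of q] in linarith)
qed

lemma bdf2_schur_bounds:
  assumes \<gamma>: "\<gamma> \<le> 1" and \<theta>: "max (1/2) ((\<gamma> + 1) / (2 + 2 / sqrt 3)) \<le> \<theta>"
  shows "msc_schur_bounds bdf2_a (bdf2_b \<theta>) bdf2_bh \<theta> \<gamma>"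
  unfolding msc_schur_bounds_def Let_def
proof (intro allI impI, goal_cases)
  case (1 q s z0)
  then have q: "0 \<le> q" "2*q \<le> s" and z0: "\<bar>z0\<bar> \<le> 2*\<gamma>*q" by simp_all
  have \<theta>1: "1/2 \<le> \<theta>" using \<theta> by simp
  have "\<gamma> + 1 \<le> \<theta> * (2 + 2 / sqrt 3)"
    using \<theta> by (simp add: pos_divide_le_eq add_pos_pos)
  then have disc: "4*(\<gamma> + 1) - 8*\<theta> \<le> 2 * sqrt (2*(8/3)) * \<theta>"
    by (simp add: real_sqrt_divide field_simps)
  have sum: "0 \<le> 8/3 + (4*\<theta> - 2) * s + 2*\<theta>^2 * q^2 + 2*z0"
    using msc_sum_condition[OF \<theta>1 _ q z0 disc] by simp
  have "\<gamma>*q \<le> q" using mult_right_mono[OF \<gamma> q(1)] by simp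
  then have "\<bar>z0\<bar> \<le> s" using q z0 by linarith
  then show ?case using sum
    by (simp add: bdf2_a_def bdf2_b_def bdf2_bh_def pair2_def abs_le_iff algebra_simps)
      (use mult_nonneg_nonneg[OF zero_le_power2[of \<theta>] zero_le_power2[of q]] in linarith)
qed

lemma adams2_schur_bounds:
  assumes \<gamma>: "\<gamma> \<le> 1" and \<theta>: "max (1/2) ((\<gamma> + 1) / 3) \<le> \<theta>"
  shows "msc_schur_bounds adams2_a (adams2_b \<theta>) adams2_bh \<theta> \<gamma>"
  unfolding msc_schur_bounds_def Let_def
proof (intro allI impI, goal_cases)
  case (1 q s z0)
  then have q: "0 \<le> q" "2*q \<le> s" and z0: "\<bar>z0\<bar> \<le> 2*\<gamma>*q" by simp_all
  have \<theta>1: "1/2 \<le> \<theta>" using \<theta> by simp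
  have disc: "4*(\<gamma> + 1) - 8*\<theta> \<le> 2 * sqrt (2*2) * \<theta>" using \<theta> by simp
  have sum: "0 \<le> 2 + (4*\<theta> - 2) * s + 2*\<theta>^2 * q^2 + 2*z0"
    using msc_sum_condition[OF \<theta>1 _ q z0 disc] by simp
  have "\<gamma>*q \<le> q" using mult_right_mono[OF \<gamma> q(1)] by simp
  then have "\<bar>z0\<bar> \<le> s" using q z0 by linarith
  then show ?case using sum
    by (simp add: adams2_a_def adams2_b_def adams2_bh_def pair2_def abs_le_iff algebra_simps)
      (use mult_nonneg_nonneg[OF zero_le_power2[of \<theta>] zero_le_power2[of q]] in linarith)
qed

theorem theorem2:
  fixes d11 d12 d21 d22 \<gamma> \<theta> :: real
  assumes psd: "\<forall>x1 x2::real. d11 * x1^2 + (d12 + d21) * x1 * x2 + d22 * x2^2 \<ge> 0"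
    and gamma: "0 \<le> \<gamma>" "\<gamma> \<le> 1"
    and mixed: "\<bar>d12 + d21\<bar> \<le> 2 * \<gamma> * sqrt (d11 * d22)"
  shows "vn_stable cnlf_a cnlf_b cnlf_bh cnlf_bc 1 d11 d12 d21 d22
    \<and> (\<theta> \<ge> max (1/2) ((\<gamma> + 1) / (2 + 2 / sqrt 3)) \<longrightarrow>
         vn_stable bdf2_a (bdf2_b \<theta>) bdf2_bh (bdf2_bc \<theta>) \<theta> d11 d12 d21 d22)
    \<and> (\<theta> \<ge> max (1/2) ((\<gamma> + 1) / 3) \<longrightarrow>
         vn_stable adams2_a (adams2_b \<theta>) adams2_bh (adams2_bc \<theta>) \<theta> d11 d12 d21 d22)"
proof (intro conjI impI)
  note stable = vn_stable_if_msc_schur_bounds[OF psd gamma(1) mixed]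
  show "vn_stable cnlf_a cnlf_b cnlf_bh cnlf_bc 1 d11 d12 d21 d22"
    by (rule stable[OF _ _ _ cnlf_schur_bounds[OF gamma(2)]])
      (simp_all add: cnlf_b_def cnlf_bc_def pair2_def)
  show "vn_stable bdf2_a (bdf2_b \<theta>) bdf2_bh (bdf2_bc \<theta>) \<theta> d11 d12 d21 d22"
    if "\<theta> \<ge> max (1/2) ((\<gamma> + 1) / (2 + 2 / sqrt 3))"
    using that by (intro stable[OF _ _ _ bdf2_schur_bounds[OF gamma(2) that]])
      (auto simp: bdf2_b_def bdf2_bc_def pair2_def)
  show "vn_stable adams2_a (adams2_b \<theta>) adams2_bh (adams2_bc \<theta>) \<theta> d11 d12 d21 d22"
    if "\<theta> \<ge> max (1/2) ((\<gamma> + 1) / 3)"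
    using that by (intro stable[OF _ _ _ adams2_schur_bounds[OF gamma(2) that]])
      (auto simp: adams2_b_def adams2_bc_def pair2_def)
qed

end
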